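(* Let $K$ be a nonempty compact convex set in $\mathbb{R}^n$, $\alpha=(u_1,u_2,\dots)$ a sequence of unit vectors, and $K_i=\mathrm{s}_{u_i}\cdots\mathrm{s}_{u_1}K$. If $L$ is a subsequential limit of $\mathrm{s}_\alpha K$, then $$\Omega(L)=\sup_i\Omega(K_i).$$
   Context: For a nonempty compact convex $K\subseteq\mathbb{R}^n$ and a unit vector $u$, the Steiner symmetrization $\mathrm{s}_uK$ is defined as follows: for each point $x$ of the orthogonal projection $\pi_uK$ of $K$ onto $u^\perp$, let $\ell_x(K)$ be the length of the segment $K\cap(x+\mathbb{R}u)$; then $\mathrm{s}_uK=\{x+tu:\ x\in\pi_uK,\ |t|\le \tfrac12\ell_x(K)\}$. Given a sequence $\alpha=(u_1,u_2,\dots)$ of unit vectors and $K$, the Steiner process is the sequence $K_i=\mathrm{s}_{u_i}\cdots\mathrm{s}_{u_1}K$; if $\lim_iK_i$ exists in the Hausdorff metric it is denoted $\mathrm{s}_\alpha K$, and a limit of a convergent subsequence of $(K_i)$ is called a subsequential limit of $\mathrm{s}_\alpha K$. $B$ is the closed unit ball centered at the origin, $V_n$ is volume, and $\Omega(K)=\int_0^\infty V_n(K\cap rB)e^{-r^2}\,dr$. *)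

theory Defs
  imports "HOL-Analysis.Analysis"
begin

definition proj_perp :: "'a::euclidean_space \<Rightarrow> 'a \<Rightarrow> 'a" where
  "proj_perp u y = y - (y \<bullet> u) *\<^sub>R u"

definition chord_length :: "'a::euclidean_space set \<Rightarrow> 'a \<Rightarrow> 'a \<Rightarrow> real" where
  "chord_length K u x = measure lebesgue {t::real. x + t *\<^sub>R u \<in> K}"

definition steiner :: "'a::euclidean_space \<Rightarrow> 'a set \<Rightarrow> 'a set" where
  "steiner u K = {x + t *\<^sub>R u | x t. x \<in> proj_perp u ` K \<and> \<bar>t\<bar> \<le> chord_length K u x / 2}"

text \<open>Steiner process: steiner_process u K i = s_{u_i} ... s_{u_1} K, where the
  direction sequence is u 0 = u_1, u 1 = u_2, ...; steiner_process u K 0 = K.\<close>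
fun steiner_process :: "(nat \<Rightarrow> 'a::euclidean_space) \<Rightarrow> 'a set \<Rightarrow> nat \<Rightarrow> 'a set" where
  "steiner_process u K 0 = K"
| "steiner_process u K (Suc i) = steiner (u i) (steiner_process u K i)"

definition hausdist :: "'a::metric_space set \<Rightarrow> 'a set \<Rightarrow> real" where
  "hausdist A B = Inf {e. 0 \<le> e \<and> A \<subseteq> (\<Union>b\<in>B. cball b e) \<and> B \<subseteq> (\<Union>a\<in>A. cball a e)}"

definition subseq_limit :: "(nat \<Rightarrow> 'a::metric_space set) \<Rightarrow> 'a set \<Rightarrow> bool" where
  "subseq_limit Ks L \<longleftrightarrow> compact L \<and> L \<noteq> {} \<and>
     (\<exists>r. strict_mono r \<and> (\<lambda>k. hausdist (Ks (r k)) L) \<longlonglongrightarrow> 0)"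

definition Omega :: "'a::euclidean_space set \<Rightarrow> real" where
  "Omega K = (LBINT r:{0..}. measure lebesgue (K \<inter> cball 0 r) * exp (- (r\<^sup>2)))"

end

theory Submission
  imports Defs "HOL-Probability.Distributions"
begin

text \<open>Steiner symmetrization never decreases the volume of K \<inter> rB: on each line parallel to u
  the chord of K \<inter> rB is an interval cut by a centred interval, and centring the first
  interval, which is what the symmetrization does, can only lengthen the cut; volumes are
  integrals of chord lengths. Hence Omega(K_i) is nondecreasing. If K_{r_k} converges to L in
  the Hausdorff metric, then K_{r_k} eventually lies in every closed neighbourhood of L, and Omega of
  these neighbourhoods tends to Omega(L); so Omega(K_i) \<le> Omega(L). Conversely, L is convex and
  every point whose e-ball lies in L lies in the convex set K_{r_k} once L is within distance e of
  it. These erosions of L exhaust the interior of L, whose complement in L is negligible, which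
  gives Omega(L) \<le> sup Omega(K_i).\<close>

lemma proj_perp_orthogonal: "norm u = 1 \<Longrightarrow> proj_perp u y \<bullet> u = 0"
  by (simp add: proj_perp_def inner_diff_left norm_eq_1)

lemma proj_perp_decomp: "y = proj_perp u y + (y \<bullet> u) *\<^sub>R u"
  by (simp add: proj_perp_def)

lemma line_coordinates:
  assumes "norm u = 1" and "p \<bullet> u = 0"
  shows "(p + s *\<^sub>R u) \<bullet> u = s" and "proj_perp u (p + s *\<^sub>R u) = p"
proof -
  have "u \<bullet> u = 1"
    using assms(1) norm_eq_1 by blast
  with assms show "(p + s *\<^sub>R u) \<bullet> u = s"
    by (simp add: inner_add_left)
  with assms show "proj_perp u (p + s *\<^sub>R u) = p"
    by (simp add: proj_perp_def)
qed

lemma mem_steiner_iff: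
  assumes u: "norm u = 1"
  shows "z \<in> steiner u K \<longleftrightarrow>
    proj_perp u z \<in> proj_perp u ` K \<and> \<bar>z \<bullet> u\<bar> \<le> chord_length K u (proj_perp u z) / 2"
    (is "_ \<longleftrightarrow> ?rhs")
proof
  assume "z \<in> steiner u K"
  then obtain x t where z: "z = x + t *\<^sub>R u" and x: "x \<in> proj_perp u ` K"
    and t: "\<bar>t\<bar> \<le> chord_length K u x / 2"
    unfolding steiner_def by blast
  have "x \<bullet> u = 0"
    using x proj_perp_orthogonal[OF u] by auto
  with x t show ?rhs
    unfolding z using line_coordinates[OF u] by simp
next
  assume ?rhs
  then show "z \<in> steiner u K"
    unfolding steiner_def using proj_perp_decomp[of z u] by blast
qed

definition chord :: "'a::euclidean_space set \<Rightarrow> 'a \<Rightarrow> 'a \<Rightarrow> real set" where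
  "chord K u x = {t. x + t *\<^sub>R u \<in> K}"

lemma chord_length_eq_measure: "chord_length K u x = measure lebesgue (chord K u x)"
  by (simp add: chord_length_def chord_def)

lemma compact_chord:
  assumes "compact K" and "norm u = 1"
  shows "compact (chord K u x)"
proof -
  have "closed (chord K u x)"
    using continuous_closed_vimage[of K "\<lambda>t. x + t *\<^sub>R u"] compact_imp_closed[OF assms(1)]
    by (auto simp: chord_def vimage_def intro: continuous_intros)
  moreover obtain B where B: "\<forall>y\<in>K. norm y \<le> B"
    using compact_imp_bounded[OF assms(1)] bounded_iff by blast
  have "\<bar>t\<bar> \<le> B + norm x" if "t \<in> chord K u x" for t
  proof -
    have "\<bar>t\<bar> = norm ((x + t *\<^sub>R u) - x)"
      using assms(2) by simp
    also have "\<dots> \<le> norm (x + t *\<^sub>R u) + norm x"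
      by (rule norm_triangle_ineq4)
    finally show ?thesis
      using that B by (auto simp: chord_def)
  qed
  then have "bounded (chord K u x)"
    unfolding bounded_iff by (metis real_norm_def)
  ultimately show ?thesis
    by (simp add: compact_eq_bounded_closed)
qed

lemma convex_chord:
  assumes "convex K"
  shows "convex (chord K u x)"
  unfolding convex_def chord_def
proof clarsimp
  fix s t a b :: real
  assume "x + s *\<^sub>R u \<in> K" "x + t *\<^sub>R u \<in> K" "0 \<le> a" "0 \<le> b" "a + b = 1"
  then have "a *\<^sub>R (x + s *\<^sub>R u) + b *\<^sub>R (x + t *\<^sub>R u) \<in> K"
    using assms unfolding convex_def by blast
  moreover have "a *\<^sub>R (x + s *\<^sub>R u) + b *\<^sub>R (x + t *\<^sub>R u) = (a + b) *\<^sub>R x + (a * s + b * t) *\<^sub>R u"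
    by (simp add: algebra_simps)
  ultimately show "x + (a * s + b * t) *\<^sub>R u \<in> K"
    using \<open>a + b = 1\<close> by simp
qed

lemma chord_eq_interval:
  assumes "compact K" "convex K" "norm u = 1" "x \<in> proj_perp u ` K"
  obtains a b where "a \<le> b" "chord K u x = {a..b}"
proof -
  obtain k where "k \<in> K" "x = proj_perp u k"
    using assms(4) by blast
  then have "k \<bullet> u \<in> chord K u x"
    using proj_perp_decomp[of k u] by (simp add: chord_def)
  moreover obtain a b where "chord K u x = cbox a b"
    using is_interval_compact compact_chord[OF assms(1,3)] convex_chord[OF assms(2)]
      is_interval_convex_1 by metis
  ultimately show ?thesis
    using that by (auto simp: cbox_interval)
qed

text \<open>Pairing the points of K that lie on a common line parallel to u exhibits the Steiner
  symmetral as a linear image of a compact convex set.\<close>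

definition steiner_pairs :: "'a::euclidean_space \<Rightarrow> 'a set \<Rightarrow> ('a \<times> 'a) set" where
  "steiner_pairs u K = {(y, w). y \<in> K \<and> w \<in> K \<and> proj_perp u y = proj_perp u w}"

definition steiner_map :: "'a::euclidean_space \<Rightarrow> 'a \<times> 'a \<Rightarrow> 'a" where
  "steiner_map u p = proj_perp u (fst p) + ((fst p \<bullet> u - snd p \<bullet> u) / 2) *\<^sub>R u"

lemma linear_steiner_map: "linear (steiner_map u)"
  unfolding steiner_map_def proj_perp_def
  by (intro linearI) (auto simp: inner_add_left algebra_simps add_divide_distrib diff_divide_distrib)

lemma steiner_eq_image:
  assumes K: "compact K" "convex K" and u: "norm u = 1"
  shows "steiner u K = steiner_map u ` steiner_pairs u K"
proof
  show "steiner u K \<subseteq> steiner_map u ` steiner_pairs u K"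
  proof
    fix z assume z: "z \<in> steiner u K"
    define x where "x = proj_perp u z"
    have x: "x \<in> proj_perp u ` K" and zu: "\<bar>z \<bullet> u\<bar> \<le> chord_length K u x / 2"
      using z mem_steiner_iff[OF u] x_def by auto
    have xu: "x \<bullet> u = 0"
      using x_def proj_perp_orthogonal[OF u] by simp
    obtain a b where ab: "a \<le> b" "chord K u x = {a..b}"
      using chord_eq_interval[OF K u x] .
    define y1 where "y1 = x + ((a + b) / 2 + z \<bullet> u) *\<^sub>R u"
    define y2 where "y2 = x + ((a + b) / 2 - z \<bullet> u) *\<^sub>R u"
    have "\<bar>z \<bullet> u\<bar> \<le> (b - a) / 2"
      using zu ab by (simp add: chord_length_eq_measure)
    then have "(a + b) / 2 + z \<bullet> u \<in> chord K u x" "(a + b) / 2 - z \<bullet> u \<in> chord K u x"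
      unfolding ab(2) by (auto simp: abs_le_iff field_simps)
    then have "y1 \<in> K" "y2 \<in> K"
      by (simp_all add: y1_def y2_def chord_def)
    then have "(y1, y2) \<in> steiner_pairs u K"
      by (simp add: steiner_pairs_def y1_def y2_def line_coordinates[OF u xu])
    moreover have "steiner_map u (y1, y2) = x + (z \<bullet> u) *\<^sub>R u"
      by (simp add: steiner_map_def y1_def y2_def line_coordinates[OF u xu])
    then have "steiner_map u (y1, y2) = z"
      by (simp add: x_def flip: proj_perp_decomp)
    ultimately show "z \<in> steiner_map u ` steiner_pairs u K"
      by (metis image_eqI)
  qed
next
  show "steiner_map u ` steiner_pairs u K \<subseteq> steiner u K"
  proof clarify
    fix y w assume "(y, w) \<in> steiner_pairs u K"
    then have y: "y \<in> K" and w: "w \<in> K" and yw: "proj_perp u y = proj_perp u w"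
      by (auto simp: steiner_pairs_def)
    define x where "x = proj_perp u y"
    have x: "x \<in> proj_perp u ` K"
      using y x_def by auto
    have xu: "x \<bullet> u = 0"
      using x_def proj_perp_orthogonal[OF u] by simp
    obtain a b where ab: "a \<le> b" "chord K u x = {a..b}"
      using chord_eq_interval[OF K u x] .
    have "y \<bullet> u \<in> chord K u x" "w \<bullet> u \<in> chord K u x"
      using y w yw proj_perp_decomp[of y u] proj_perp_decomp[of w u]
      by (auto simp: chord_def x_def)
    then have "\<bar>(y \<bullet> u - w \<bullet> u) / 2\<bar> \<le> chord_length K u x / 2"
      using ab by (auto simp: chord_length_eq_measure)
    moreover have "steiner_map u (y, w) = x + ((y \<bullet> u - w \<bullet> u) / 2) *\<^sub>R u"
      by (simp add: steiner_map_def x_def)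
    ultimately show "steiner_map u (y, w) \<in> steiner u K"
      using x by (simp only: mem_steiner_iff[OF u] line_coordinates[OF u xu])
  qed
qed

lemma steiner_compact_convex:
  assumes K: "compact K" "convex K" "K \<noteq> {}" and u: "norm u = 1"
  shows "compact (steiner u K)" "convex (steiner u K)" "steiner u K \<noteq> {}"
proof -
  let ?E = "{p::'a \<times> 'a. proj_perp u (fst p) - proj_perp u (snd p) = 0}"
  have pairs: "steiner_pairs u K = (K \<times> K) \<inter> ?E"
    by (auto simp: steiner_pairs_def)
  have "closed ?E"
    by (intro closed_Collect_eq) (simp_all add: proj_perp_def continuous_intros)
  moreover have "linear (\<lambda>p::'a \<times> 'a. proj_perp u (fst p) - proj_perp u (snd p))"
    unfolding proj_perp_def by (intro linearI) (auto simp: inner_add_left algebra_simps)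
  then have "convex ?E"
    by (intro subspace_imp_convex linear_subspace_kernel)
  ultimately have "compact (steiner_pairs u K)" "convex (steiner_pairs u K)"
    unfolding pairs using K by (simp_all add: compact_Int_closed compact_Times convex_Int convex_Times)
  moreover have "continuous_on (steiner_pairs u K) (steiner_map u)"
    using linear_steiner_map
    by (intro linear_continuous_on linear_conv_bounded_linear[THEN iffD1])
  ultimately show "compact (steiner u K)" "convex (steiner u K)"
    unfolding steiner_eq_image[OF K(1,2) u]
    by (simp_all add: compact_continuous_image convex_linear_image[OF linear_steiner_map])
  obtain k where "k \<in> K"
    using K(3) by blast
  then have "(k, k) \<in> steiner_pairs u K"
    by (simp add: steiner_pairs_def)
  then show "steiner u K \<noteq> {}"
    unfolding steiner_eq_image[OF K(1,2) u] by blast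
qed

definition slab :: "'a::euclidean_space \<Rightarrow> 'a set" where
  "slab u = {x. 0 \<le> x \<bullet> u \<and> x \<bullet> u \<le> 1}"

lemma slab_borel [measurable]: "slab u \<in> sets borel"
  unfolding slab_def by measurable

lemma chord_borel [measurable]:
  assumes [measurable]: "A \<in> sets borel"
  shows "chord A u x \<in> sets borel"
  unfolding chord_def by measurable

lemma nn_integral_lborel_add:
  fixes f :: "'a::euclidean_space \<Rightarrow> ennreal"
  assumes "f \<in> borel_measurable borel"
  shows "(\<integral>\<^sup>+x. f (x + v) \<partial>lborel) = (\<integral>\<^sup>+y. f y \<partial>lborel)"
proof -
  have "(\<integral>\<^sup>+y. f y \<partial>lborel) = (\<integral>\<^sup>+y. f y \<partial>distr lborel borel ((+) v))"
    by (simp add: lborel_distr_plus)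
  also have "\<dots> = (\<integral>\<^sup>+x. f (v + x) \<partial>lborel)"
    using assms by (intro nn_integral_distr) auto
  finally show ?thesis
    by (simp add: add.commute)
qed

lemma nn_integral_slab_along_line:
  assumes "norm u = 1"
  shows "(\<integral>\<^sup>+t. indicator (slab u) (y - t *\<^sub>R u) \<partial>lborel) = 1"
proof -
  have "{t. y - t *\<^sub>R u \<in> slab u} = {y \<bullet> u - 1 .. y \<bullet> u}"
    using assms by (auto simp: slab_def inner_diff_left norm_eq_1)
  then have "indicator (slab u) (y - t *\<^sub>R u) = (indicator {y \<bullet> u - 1 .. y \<bullet> u} t :: ennreal)" for t
    by (simp add: indicator_def set_eq_iff)
  then show ?thesis
    by simp
qed

text \<open>Each line parallel to u meets the unit slab in a parameter interval of length one, so
  integrating the chord measures of A over the slab recovers the measure of A.\<close>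

lemma emeasure_eq_nn_integral_chords:
  assumes u: "norm u = 1" and A [measurable]: "A \<in> sets borel"
  shows "emeasure lborel A = (\<integral>\<^sup>+x. indicator (slab u) x * emeasure lborel (chord A u x) \<partial>lborel)"
proof -
  have P: "pair_sigma_finite (lborel :: 'a measure) (lborel :: real measure)"
    by unfold_locales
  have chord: "emeasure lborel (chord A u x) = (\<integral>\<^sup>+t. indicator A (x + t *\<^sub>R u) \<partial>lborel)" for x
  proof -
    have "indicator A (x + t *\<^sub>R u) = (indicator (chord A u x) t :: ennreal)" for t
      by (simp add: chord_def indicator_def)
    then show ?thesis
      using chord_borel[OF A] by simp
  qed
  have "(\<integral>\<^sup>+x. indicator (slab u) x * emeasure lborel (chord A u x) \<partial>lborel)
      = (\<integral>\<^sup>+x. \<integral>\<^sup>+t. indicator (slab u) x * indicator A (x + t *\<^sub>R u) \<partial>lborel \<partial>lborel)"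
    unfolding chord by (intro nn_integral_cong nn_integral_cmult[symmetric]) measurable
  also have "\<dots> = (\<integral>\<^sup>+t. \<integral>\<^sup>+x. indicator (slab u) x * indicator A (x + t *\<^sub>R u) \<partial>lborel \<partial>lborel)"
    by (rule pair_sigma_finite.Fubini'[OF P, symmetric]) measurable
  also have "\<dots> = (\<integral>\<^sup>+t. \<integral>\<^sup>+y. indicator (slab u) (y - t *\<^sub>R u) * indicator A y \<partial>lborel \<partial>lborel)"
  proof (rule nn_integral_cong)
    fix t :: real
    have "(\<lambda>y. indicator (slab u) (y - t *\<^sub>R u) * indicator A y :: ennreal) \<in> borel_measurable borel"
      by measurable
    from nn_integral_lborel_add[OF this, of "t *\<^sub>R u"]
    show "(\<integral>\<^sup>+x. indicator (slab u) x * indicator A (x + t *\<^sub>R u) \<partial>lborel)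
        = (\<integral>\<^sup>+y. indicator (slab u) (y - t *\<^sub>R u) * indicator A y \<partial>lborel)"
      by simp
  qed
  also have "\<dots> = (\<integral>\<^sup>+y. \<integral>\<^sup>+t. indicator (slab u) (y - t *\<^sub>R u) * indicator A y \<partial>lborel \<partial>lborel)"
    by (rule pair_sigma_finite.Fubini'[OF P]) measurable
  also have "\<dots> = (\<integral>\<^sup>+y. indicator A y \<partial>lborel)"
    by (intro nn_integral_cong)
      (simp add: nn_integral_multc nn_integral_slab_along_line[OF u])
  finally show ?thesis
    using A by simp
qed

lemma emeasure_chord_proj_perp:
  assumes [measurable]: "A \<in> sets borel"
  shows "emeasure lborel (chord A u x) = emeasure lborel (chord A u (proj_perp u x))"
proof -
  have shift: "indicator (chord A u x) t = (indicator (chord A u (proj_perp u x)) (t + x \<bullet> u) :: ennreal)"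
    for t
    by (simp add: chord_def indicator_def proj_perp_def algebra_simps)
  have "emeasure lborel (chord A u x) = (\<integral>\<^sup>+t. indicator (chord A u x) t \<partial>lborel)"
    by simp
  also have "\<dots> = (\<integral>\<^sup>+t. indicator (chord A u (proj_perp u x)) (t + x \<bullet> u) \<partial>lborel)"
    by (simp only: shift)
  also have "\<dots> = emeasure lborel (chord A u (proj_perp u x))"
    by (subst nn_integral_lborel_add) simp_all
  finally show ?thesis .
qed

lemma emeasure_mono_chords:
  assumes u: "norm u = 1" and [measurable]: "A \<in> sets borel" "B \<in> sets borel"
    and le: "\<And>p. p \<bullet> u = 0 \<Longrightarrow> emeasure lborel (chord A u p) \<le> emeasure lborel (chord B u p)"
  shows "emeasure lborel A \<le> emeasure lborel B"
proof -
  have "emeasure lborel (chord A u x) \<le> emeasure lborel (chord B u x)" for x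
    using le[OF proj_perp_orthogonal[OF u]]
    by (metis emeasure_chord_proj_perp assms(2,3))
  then show ?thesis
    unfolding emeasure_eq_nn_integral_chords[OF u assms(2)] emeasure_eq_nn_integral_chords[OF u assms(3)]
    by (intro nn_integral_mono mult_left_mono) auto
qed

lemma chord_Int: "chord (A \<inter> B) u x = chord A u x \<inter> chord B u x"
  by (auto simp: chord_def)

lemma chord_cball:
  assumes u: "norm u = 1" and p: "p \<bullet> u = 0" and "0 \<le> r"
  shows "chord (cball 0 r) u p = {- sqrt (r\<^sup>2 - (norm p)\<^sup>2) .. sqrt (r\<^sup>2 - (norm p)\<^sup>2)}"
proof -
  have "(p + t *\<^sub>R u) \<bullet> (p + t *\<^sub>R u) = (norm p)\<^sup>2 + t\<^sup>2" for t
    using p u by (simp add: power2_norm_eq_inner inner_add_left inner_add_right inner_commute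
        norm_eq_1 algebra_simps) (simp add: power2_eq_square)
  then have "t \<in> chord (cball 0 r) u p \<longleftrightarrow> t\<^sup>2 \<le> r\<^sup>2 - (norm p)\<^sup>2" for t
    using \<open>0 \<le> r\<close> by (simp add: chord_def norm_le_square algebra_simps)
  then have "t \<in> chord (cball 0 r) u p \<longleftrightarrow> \<bar>t\<bar> \<le> sqrt (r\<^sup>2 - (norm p)\<^sup>2)" for t
    by (metis real_sqrt_abs real_sqrt_le_iff)
  then show ?thesis
    by (simp add: set_eq_iff abs_le_iff) (meson minus_le_iff)
qed

lemma chord_eq_empty: "p \<bullet> u = 0 \<Longrightarrow> norm u = 1 \<Longrightarrow> p \<notin> proj_perp u ` K \<Longrightarrow> chord K u p = {}"
  by (force simp: chord_def line_coordinates)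

lemma chord_steiner:
  assumes u: "norm u = 1" and p: "p \<bullet> u = 0" "p \<in> proj_perp u ` K"
    and ab: "a \<le> b" "chord K u p = {a..b}"
  shows "chord (steiner u K) u p = {-((b - a) / 2) .. (b - a) / 2}"
proof -
  define h where "h = (b - a) / 2"
  have "t \<in> chord (steiner u K) u p \<longleftrightarrow> \<bar>t\<bar> \<le> h" for t
    using p ab by (simp add: chord_def mem_steiner_iff[OF u] line_coordinates[OF u] chord_length_eq_measure h_def)
  then show ?thesis
    unfolding h_def[symmetric] by (simp add: set_eq_iff abs_le_iff) (meson minus_le_iff)
qed

lemma emeasure_Int_centred_interval_le:
  fixes a b h \<rho> :: real
  assumes "b - a \<le> 2 * h"
  shows "emeasure lborel ({a..b} \<inter> {-\<rho>..\<rho>}) \<le> emeasure lborel ({-h..h} \<inter> {-\<rho>..\<rho>})"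
proof -
  have "{a..b} \<inter> {-\<rho>..\<rho>} = {max a (-\<rho>)..min b \<rho>}" "{-h..h} \<inter> {-\<rho>..\<rho>} = {max (-h) (-\<rho>)..min h \<rho>}"
    by auto
  moreover have "(if max a (-\<rho>) \<le> min b \<rho> then min b \<rho> - max a (-\<rho>) else 0)
      \<le> (if max (-h) (-\<rho>) \<le> min h \<rho> then min h \<rho> - max (-h) (-\<rho>) else 0)"
    using assms by (auto simp: min_def max_def)
  ultimately show ?thesis
    by (simp only: emeasure_lborel_Icc_eq ennreal_leI)
qed

lemma emeasure_chord_Int_cball_le_steiner:
  assumes K: "compact K" "convex K" and u: "norm u = 1" and p: "p \<bullet> u = 0" and "0 \<le> r"
  shows "emeasure lborel (chord (K \<inter> cball 0 r) u p) \<le> emeasure lborel (chord (steiner u K \<inter> cball 0 r) u p)"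
proof (cases "p \<in> proj_perp u ` K")
  case False
  then show ?thesis
    by (simp add: chord_Int chord_eq_empty[OF p u])
next
  case True
  obtain a b where ab: "a \<le> b" "chord K u p = {a..b}"
    using chord_eq_interval[OF K u True] .
  define h where "h = (b - a) / 2"
  define \<rho> where "\<rho> = sqrt (r\<^sup>2 - (norm p)\<^sup>2)"
  have "chord (K \<inter> cball 0 r) u p = {a..b} \<inter> {-\<rho>..\<rho>}"
    "chord (steiner u K \<inter> cball 0 r) u p = {-h..h} \<inter> {-\<rho>..\<rho>}"
    using chord_steiner[OF u p True ab, folded h_def] chord_cball[OF u p \<open>0 \<le> r\<close>, folded \<rho>_def]
    by (simp_all add: chord_Int ab)
  then show ?thesis
    using emeasure_Int_centred_interval_le[of b a h \<rho>] by (simp add: h_def)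
qed

lemma measure_mono_compact:
  fixes A B :: "'a::euclidean_space set"
  shows "compact A \<Longrightarrow> compact B \<Longrightarrow> A \<subseteq> B \<Longrightarrow> measure lebesgue A \<le> measure lebesgue B"
  by (intro measure_mono_fmeasurable) (auto intro: lmeasurable_compact fmeasurableD)

lemma compact_Int_cball: "compact A \<Longrightarrow> compact (A \<inter> cball 0 r)"
  by (simp add: compact_Int_closed)

lemma measure_Int_cball_le_steiner:
  assumes K: "compact K" "convex K" "K \<noteq> {}" and u: "norm u = 1" and "0 \<le> r"
  shows "measure lebesgue (K \<inter> cball 0 r) \<le> measure lebesgue (steiner u K \<inter> cball 0 r)"
proof -
  have cA: "compact (K \<inter> cball 0 r)" and cB: "compact (steiner u K \<inter> cball 0 r)"
    using K(1) steiner_compact_convex(1)[OF K u] by (auto intro: compact_Int_cball)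
  then have [measurable]: "K \<inter> cball 0 r \<in> sets borel" "steiner u K \<inter> cball 0 r \<in> sets borel"
    by (auto intro: borel_compact)
  have "emeasure lborel (K \<inter> cball 0 r) \<le> emeasure lborel (steiner u K \<inter> cball 0 r)"
    by (rule emeasure_mono_chords[OF u])
      (simp_all add: emeasure_chord_Int_cball_le_steiner[OF K(1,2) u _ \<open>0 \<le> r\<close>])
  then have "measure lborel (K \<inter> cball 0 r) \<le> measure lborel (steiner u K \<inter> cball 0 r)"
    using emeasure_compact_finite[OF cB] by (simp add: measure_def enn2real_mono)
  then show ?thesis
    by (simp add: measure_completion)
qed

definition Omega_integrand :: "'a::euclidean_space set \<Rightarrow> real \<Rightarrow> real" where
  "Omega_integrand A r = indicator {0..} r *\<^sub>R (measure lebesgue (A \<inter> cball 0 r) * exp (- (r\<^sup>2)))"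

lemma Omega_eq_integral: "Omega A = integral\<^sup>L lborel (Omega_integrand A)"
  unfolding Omega_def Omega_integrand_def[abs_def] set_lebesgue_integral_def by simp

lemma Omega_integrand_measurable:
  assumes "compact A"
  shows "Omega_integrand A \<in> borel_measurable borel"
proof -
  have "mono (\<lambda>r. measure lebesgue (A \<inter> cball 0 r))"
    using assms by (intro monoI measure_mono_compact compact_Int_cball) auto
  then have [measurable]: "(\<lambda>r. measure lebesgue (A \<inter> cball 0 r)) \<in> borel_measurable borel"
    by (rule borel_measurable_mono)
  show ?thesis
    unfolding Omega_integrand_def by measurable
qed

lemma integrable_gaussian_halfline: "integrable lborel (\<lambda>r::real. indicator {0..} r *\<^sub>R exp (- r\<^sup>2))"
  using gaussian_moment_0 by (simp add: has_bochner_integral_iff)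

lemma norm_Omega_integrand_le:
  assumes "compact A" "compact C" "A \<subseteq> C"
  shows "norm (Omega_integrand A r) \<le> measure lebesgue C * (indicator {0..} r *\<^sub>R exp (- r\<^sup>2))"
proof -
  have "measure lebesgue (A \<inter> cball 0 r) \<le> measure lebesgue C"
    using assms by (intro measure_mono_compact compact_Int_cball) auto
  then show ?thesis
    by (auto simp: Omega_integrand_def indicator_def abs_mult intro!: mult_right_mono)
qed

lemma integrable_Omega_integrand:
  assumes "compact A"
  shows "integrable lborel (Omega_integrand A)"
proof (rule Bochner_Integration.integrable_bound)
  show "integrable lborel (\<lambda>r. measure lebesgue A * (indicator {0..} r *\<^sub>R exp (- r\<^sup>2)))"
    by (rule integrable_mult_right[OF integrable_gaussian_halfline])
  show "AE r in lborel. norm (Omega_integrand A r)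
      \<le> norm (measure lebesgue A * (indicator {0..} r *\<^sub>R exp (- r\<^sup>2)))"
    using norm_Omega_integrand_le[OF assms assms order_refl]
    by (intro AE_I2) (metis abs_ge_self order_trans real_norm_def)
qed (simp add: Omega_integrand_measurable[OF assms])

lemma Omega_mono:
  assumes "compact A" "compact B"
    and le: "\<And>r. 0 \<le> r \<Longrightarrow> measure lebesgue (A \<inter> cball 0 r) \<le> measure lebesgue (B \<inter> cball 0 r)"
  shows "Omega A \<le> Omega B"
  unfolding Omega_eq_integral
  using le by (intro integral_mono integrable_Omega_integrand assms)
    (auto simp: Omega_integrand_def indicator_def intro!: mult_right_mono)

lemma Omega_subset_mono: "compact A \<Longrightarrow> compact B \<Longrightarrow> A \<subseteq> B \<Longrightarrow> Omega A \<le> Omega B"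
  by (intro Omega_mono measure_mono_compact compact_Int_cball) auto

lemma Omega_tendsto:
  assumes "\<And>m. compact (A m)" "compact L" "compact C" "\<And>m. A m \<subseteq> C"
    and lim: "\<And>r. (\<lambda>m. measure lebesgue (A m \<inter> cball 0 r)) \<longlonglongrightarrow> measure lebesgue (L \<inter> cball 0 r)"
  shows "(\<lambda>m. Omega (A m)) \<longlonglongrightarrow> Omega L"
  unfolding Omega_eq_integral
proof (rule integral_dominated_convergence)
  show "integrable lborel (\<lambda>r. measure lebesgue C * (indicator {0..} r *\<^sub>R exp (- r\<^sup>2)))"
    by (rule integrable_mult_right[OF integrable_gaussian_halfline])
  show "AE r in lborel. (\<lambda>m. Omega_integrand (A m) r) \<longlonglongrightarrow> Omega_integrand L r"
    unfolding Omega_integrand_def by (intro AE_I2 tendsto_intros lim)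
  show "\<And>m. AE r in lborel. norm (Omega_integrand (A m) r)
      \<le> measure lebesgue C * (indicator {0..} r *\<^sub>R exp (- r\<^sup>2))"
    using assms by (intro AE_I2 norm_Omega_integrand_le)
qed (simp_all add: assms Omega_integrand_measurable)

definition cthickening :: "'a::metric_space set \<Rightarrow> real \<Rightarrow> 'a set" where
  "cthickening L e = (\<Union>l\<in>L. cball l e)"

definition erosion :: "'a::metric_space set \<Rightarrow> real \<Rightarrow> 'a set" where
  "erosion L e = {z. cball z e \<subseteq> L}"

lemma compact_cthickening:
  fixes L :: "'a::euclidean_space set"
  assumes "compact L"
  shows "compact (cthickening L e)"
proof -
  have "cthickening L e = (\<Union>x\<in>L. \<Union>v\<in>cball 0 e. {x + v})"
  proof (intro equalityI subsetI)
    fix z assume "z \<in> cthickening L e"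
    then obtain l where "l \<in> L" "dist l z \<le> e"
      by (auto simp: cthickening_def)
    then show "z \<in> (\<Union>x\<in>L. \<Union>v\<in>cball 0 e. {x + v})"
      by (intro UN_I[of l] UN_I[of "z - l"]) (auto simp: dist_norm norm_minus_commute)
  qed (force simp: cthickening_def dist_norm)
  then show ?thesis
    using compact_sums'[OF assms compact_cball] by simp
qed

lemma cthickening_mono: "e \<le> e' \<Longrightarrow> cthickening L e \<subseteq> cthickening L e'"
  by (auto simp: cthickening_def)

lemma subset_cthickening: "0 \<le> e \<Longrightarrow> L \<subseteq> cthickening L e"
  by (force simp: cthickening_def)

lemma Inter_cthickening:
  assumes "closed L"
  shows "(\<Inter>m. cthickening L (inverse (Suc m))) = L"
proof (intro equalityI subsetI)
  fix x assume x: "x \<in> (\<Inter>m. cthickening L (inverse (Suc m)))"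
  have "\<exists>l\<in>L. dist l x < e" if e: "e > 0" for e
  proof -
    obtain m where "inverse (real (Suc m)) < e"
      using reals_Archimedean[OF e] by blast
    moreover obtain l where "l \<in> L" "dist l x \<le> inverse (Suc m)"
      using x by (auto simp: cthickening_def)
    ultimately show ?thesis
      by force
  qed
  then show "x \<in> L"
    using closed_approachable[OF assms] by blast
qed (simp add: subset_cthickening[THEN subsetD])

lemma closed_erosion:
  fixes L :: "'a::real_normed_vector set"
  assumes "closed L"
  shows "closed (erosion L e)"
proof -
  have "erosion L e = (\<Inter>v\<in>cball 0 e. (\<lambda>z. z + v) -` L)"
  proof (intro equalityI subsetI)
    fix z assume z: "z \<in> (\<Inter>v\<in>cball 0 e. (\<lambda>z. z + v) -` L)"
    have "y \<in> L" if "y \<in> cball z e" for y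
    proof -
      have "y - z \<in> cball 0 e"
        using that by (simp add: dist_norm norm_minus_commute)
      then show ?thesis
        using z by force
    qed
    then show "z \<in> erosion L e"
      by (auto simp: erosion_def)
  qed (auto simp: erosion_def dist_norm)
  then show ?thesis
    using assms by (auto intro!: closed_INT continuous_closed_vimage continuous_intros)
qed

lemma erosion_subset: "0 \<le> e \<Longrightarrow> erosion L e \<subseteq> L"
  by (auto simp: erosion_def)

lemma compact_erosion:
  fixes L :: "'a::euclidean_space set"
  assumes "compact L" "0 \<le> e"
  shows "compact (erosion L e)"
proof -
  have "closed (erosion L e)"
    using assms(1) by (intro closed_erosion compact_imp_closed)
  moreover have "bounded (erosion L e)"
    using erosion_subset[OF assms(2)] compact_imp_bounded[OF assms(1)] bounded_subset by blast
  ultimately show ?thesis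
    by (simp add: compact_eq_bounded_closed)
qed

lemma erosion_antimono: "e \<le> e' \<Longrightarrow> erosion L e' \<subseteq> erosion L e"
  by (auto simp: erosion_def)

lemma Union_erosion: "(\<Union>m. erosion L (inverse (Suc m))) = interior L"
proof (intro equalityI subsetI)
  fix z assume "z \<in> interior L"
  then obtain e where "e > 0" "cball z e \<subseteq> L"
    using mem_interior_cball by blast
  moreover obtain m where "inverse (real (Suc m)) < e"
    using reals_Archimedean[OF \<open>e > 0\<close>] by blast
  ultimately have "z \<in> erosion L (inverse (Suc m))"
    by (auto simp: erosion_def)
  then show "z \<in> (\<Union>m. erosion L (inverse (Suc m)))"
    by blast
next
  fix z assume "z \<in> (\<Union>m. erosion L (inverse (Suc m)))"
  then obtain m where "cball z (inverse (Suc m)) \<subseteq> L"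
    by (auto simp: erosion_def)
  then show "z \<in> interior L"
    unfolding mem_interior_cball by (intro exI[of _ "inverse (Suc m)"]) auto
qed

lemma measure_cthickening_tendsto:
  fixes L :: "'a::euclidean_space set"
  assumes "compact L"
  shows "(\<lambda>m. measure lebesgue (cthickening L (inverse (Suc m)) \<inter> cball 0 r))
    \<longlonglongrightarrow> measure lebesgue (L \<inter> cball 0 r)"
proof -
  have compact: "compact (cthickening L (inverse (Suc m)) \<inter> cball 0 r)" for m
    by (intro compact_Int_cball compact_cthickening assms)
  have "decseq (\<lambda>m. cthickening L (inverse (Suc m)) \<inter> cball 0 r)"
    by (intro decseq_SucI Int_mono cthickening_mono order_refl) (simp add: field_simps)
  then have "(\<lambda>m. measure lebesgue (cthickening L (inverse (Suc m)) \<inter> cball 0 r))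
      \<longlonglongrightarrow> measure lebesgue (\<Inter>m. cthickening L (inverse (Suc m)) \<inter> cball 0 r)"
    using compact fmeasurableD2[OF lmeasurable_compact[OF compact]]
    by (intro Lim_measure_decseq) (auto intro: lmeasurable_compact fmeasurableD)
  also have "(\<Inter>m. cthickening L (inverse (Suc m)) \<inter> cball 0 r) = L \<inter> cball 0 r"
    using Inter_cthickening[OF compact_imp_closed[OF assms]] by blast
  finally show ?thesis .
qed

text \<open>The erosions exhaust only the interior of L; convexity makes the boundary negligible.\<close>

lemma measure_erosion_tendsto:
  fixes L :: "'a::euclidean_space set"
  assumes "compact L" "convex L"
  shows "(\<lambda>m. measure lebesgue (erosion L (inverse (Suc m)) \<inter> cball 0 r))
    \<longlonglongrightarrow> measure lebesgue (L \<inter> cball 0 r)"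
proof -
  have compact: "compact (erosion L (inverse (Suc m)) \<inter> cball 0 r)" for m
    by (intro compact_Int_cball compact_erosion assms) simp
  have union: "(\<Union>m. erosion L (inverse (Suc m)) \<inter> cball 0 r) = interior L \<inter> cball 0 r"
    using Union_erosion by blast
  have "emeasure lebesgue (interior L \<inter> cball 0 r) \<le> emeasure lebesgue (L \<inter> cball 0 r)"
    using interior_subset assms(1)
    by (intro emeasure_mono) (auto intro: lmeasurable_compact fmeasurableD compact_Int_cball)
  then have fin: "emeasure lebesgue (interior L \<inter> cball 0 r) \<noteq> \<infinity>"
    using fmeasurableD2[OF lmeasurable_compact[OF compact_Int_cball[OF assms(1)]]]
    by (metis infinity_ennreal_def neq_top_trans)
  have "incseq (\<lambda>m. erosion L (inverse (Suc m)) \<inter> cball 0 r)"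
    by (intro incseq_SucI Int_mono erosion_antimono order_refl) (simp add: field_simps)
  then have "(\<lambda>m. measure lebesgue (erosion L (inverse (Suc m)) \<inter> cball 0 r))
      \<longlonglongrightarrow> measure lebesgue (\<Union>m. erosion L (inverse (Suc m)) \<inter> cball 0 r)"
    using compact by (intro Lim_measure_incseq fin[folded union]) (auto intro: lmeasurable_compact fmeasurableD)
  also have "(\<Union>m. erosion L (inverse (Suc m)) \<inter> cball 0 r) = interior L \<inter> cball 0 r"
    by (fact union)
  also have "measure lebesgue (interior L \<inter> cball 0 r) = measure lebesgue (L \<inter> cball 0 r)"
  proof (rule measure_negligible_symdiff)
    show "L \<inter> cball 0 r \<in> lmeasurable"
      by (intro lmeasurable_compact compact_Int_cball assms)
    have "L \<inter> cball 0 r - interior L \<inter> cball 0 r \<union> (interior L \<inter> cball 0 r - L \<inter> cball 0 r) \<subseteq> frontier L"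
      using interior_subset closure_subset by (auto simp: frontier_def)
    then show "negligible (L \<inter> cball 0 r - interior L \<inter> cball 0 r \<union> (interior L \<inter> cball 0 r - L \<inter> cball 0 r))"
      using negligible_convex_frontier[OF assms(2)] negligible_subset by blast
  qed
  finally show ?thesis .
qed

lemma hausdist_less_imp_subset_cthickening:
  fixes A B :: "'a::metric_space set"
  assumes "bounded A" "bounded B" "A \<noteq> {}" "B \<noteq> {}" and "hausdist A B < e"
  shows "A \<subseteq> cthickening B e" "B \<subseteq> cthickening A e"
proof -
  define X where "X = {e. 0 \<le> e \<and> A \<subseteq> cthickening B e \<and> B \<subseteq> cthickening A e}"
  have "diameter (A \<union> B) \<in> X"
    using assms(1-4) diameter_bounded_bound[of "A \<union> B"] diameter_ge_0[of "A \<union> B"]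
    by (fastforce simp: X_def cthickening_def dist_commute)
  then obtain e' where "e' \<in> X" "e' < e"
    using cInf_lessD[of X e] assms(5) by (auto simp: hausdist_def X_def cthickening_def)
  then show "A \<subseteq> cthickening B e" "B \<subseteq> cthickening A e"
    using cthickening_mono[of e' e] by (auto simp: X_def)
qed

lemma subseq_limit_frequently_close:
  assumes "subseq_limit Ks L" "\<And>i. compact (Ks i)" "\<And>i. Ks i \<noteq> {}" "e > 0"
  shows "\<exists>j\<ge>i. Ks j \<subseteq> cthickening L e \<and> L \<subseteq> cthickening (Ks j) e"
proof -
  obtain r where L: "compact L" "L \<noteq> {}" and r: "strict_mono r"
    and lim: "(\<lambda>k. hausdist (Ks (r k)) L) \<longlonglongrightarrow> 0"
    using assms(1) unfolding subseq_limit_def by blast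
  obtain N where "\<And>k. k \<ge> N \<Longrightarrow> hausdist (Ks (r k)) L < e"
    using order_tendstoD(2)[OF lim assms(4)] by (auto simp: eventually_sequentially)
  then have "hausdist (Ks (r (max N i))) L < e"
    by simp
  moreover have "i \<le> r (max N i)"
    using seq_suble[OF r, of "max N i"] by linarith
  ultimately show ?thesis
    using hausdist_less_imp_subset_cthickening[OF compact_imp_bounded[OF assms(2)]
        compact_imp_bounded[OF L(1)] assms(3) L(2)]
    by blast
qed

lemma convex_if_cthickening_approximations:
  fixes L :: "'a::real_normed_vector set"
  assumes "closed L"
    and approx: "\<And>e. e > 0 \<Longrightarrow> \<exists>K. convex K \<and> K \<subseteq> cthickening L e \<and> L \<subseteq> cthickening K e"
  shows "convex L"
  unfolding convex_def
proof clarify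
  fix x y :: 'a and a b :: real
  assume xy: "x \<in> L" "y \<in> L" "0 \<le> a" "0 \<le> b" "a + b = 1"
  have "\<exists>l\<in>L. dist l (a *\<^sub>R x + b *\<^sub>R y) < \<epsilon>" if "\<epsilon> > 0" for \<epsilon>
  proof -
    obtain K where K: "convex K" "K \<subseteq> cthickening L (\<epsilon> / 3)" "L \<subseteq> cthickening K (\<epsilon> / 3)"
      using approx[of "\<epsilon> / 3"] \<open>\<epsilon> > 0\<close> by auto
    obtain x' where x': "x' \<in> K" "dist x' x \<le> \<epsilon> / 3"
      using K(3) xy(1) by (auto simp: cthickening_def)
    obtain y' where y': "y' \<in> K" "dist y' y \<le> \<epsilon> / 3"
      using K(3) xy(2) by (auto simp: cthickening_def)
    have "a *\<^sub>R x' + b *\<^sub>R y' \<in> K"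
      using K(1) x'(1) y'(1) xy(3-5) unfolding convex_def by blast
    then obtain l where l: "l \<in> L" "dist l (a *\<^sub>R x' + b *\<^sub>R y') \<le> \<epsilon> / 3"
      using K(2) by (auto simp: cthickening_def)
    have "dist (a *\<^sub>R x' + b *\<^sub>R y') (a *\<^sub>R x + b *\<^sub>R y) = norm (a *\<^sub>R (x' - x) + b *\<^sub>R (y' - y))"
      by (simp add: dist_norm algebra_simps)
    also have "\<dots> \<le> a * dist x' x + b * dist y' y"
      using xy(3,4) norm_triangle_ineq[of "a *\<^sub>R (x' - x)" "b *\<^sub>R (y' - y)"] by (simp add: dist_norm)
    also have "\<dots> \<le> a * (\<epsilon> / 3) + b * (\<epsilon> / 3)"
      using xy(3,4) x'(2) y'(2) by (intro add_mono mult_left_mono) auto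
    also have "\<dots> = \<epsilon> / 3"
      using xy(5) by (simp flip: distrib_right)
    finally show ?thesis
      using l \<open>\<epsilon> > 0\<close> dist_triangle[of l "a *\<^sub>R x + b *\<^sub>R y" "a *\<^sub>R x' + b *\<^sub>R y'"] by force
  qed
  then show "a *\<^sub>R x + b *\<^sub>R y \<in> L"
    using closed_approachable[OF assms(1)] by blast
qed

text \<open>A point outside the closed convex set K is separated from K by a hyperplane; moving
  distance e away from that hyperplane stays in L but leaves the e-neighbourhood of K.\<close>

lemma erosion_subset_if_subset_cthickening:
  fixes K L :: "'a::euclidean_space set"
  assumes "convex K" "closed K" and sub: "L \<subseteq> cthickening K e" and "0 \<le> e"
  shows "erosion L e \<subseteq> K"
proof
  fix z assume z: "z \<in> erosion L e"
  show "z \<in> K"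
  proof (rule ccontr)
    assume "z \<notin> K"
    then obtain a b where ab: "a \<bullet> z < b" "\<forall>x\<in>K. a \<bullet> x > b"
      using separating_hyperplane_closed_point[OF assms(1,2)] by blast
    have "z \<in> L"
      using z \<open>0 \<le> e\<close> by (auto simp: erosion_def)
    then obtain k0 where "k0 \<in> K"
      using sub by (auto simp: cthickening_def)
    then have "a \<noteq> 0"
      using ab by force
    define w where "w = z - (e / norm a) *\<^sub>R a"
    have "w \<in> L"
      using z \<open>a \<noteq> 0\<close> \<open>0 \<le> e\<close> by (auto simp: erosion_def w_def dist_norm)
    then obtain k where k: "k \<in> K" "dist k w \<le> e"
      using sub by (auto simp: cthickening_def)
    have "a \<bullet> (k - w) \<le> norm a * e"
      using norm_cauchy_schwarz[of a "k - w"] mult_left_mono[OF k(2)[unfolded dist_norm] norm_ge_zero[of a]]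
      by linarith
    moreover have "a \<bullet> w = a \<bullet> z - e * norm a"
      using \<open>a \<noteq> 0\<close> by (simp add: w_def inner_diff_right dot_square_norm power2_eq_square)
    ultimately have "a \<bullet> k \<le> a \<bullet> z"
      by (simp add: inner_diff_right algebra_simps)
    then show False
      using ab k(1) by force
  qed
qed

lemma Omega_le_if_cthickening_covers:
  fixes L :: "'a::euclidean_space set"
  assumes "compact L" "convex L"
    and cover: "\<And>e. e > 0 \<Longrightarrow> \<exists>K. compact K \<and> convex K \<and> L \<subseteq> cthickening K e \<and> Omega K \<le> c"
  shows "Omega L \<le> c"
proof (rule LIMSEQ_le_const2)
  show "(\<lambda>m. Omega (erosion L (inverse (Suc m)))) \<longlonglongrightarrow> Omega L"
    using assms(1,2) erosion_subset[of "inverse (Suc _)" L]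
    by (intro Omega_tendsto compact_erosion measure_erosion_tendsto) auto
  show "\<exists>N. \<forall>m\<ge>N. Omega (erosion L (inverse (Suc m))) \<le> c"
  proof (intro exI allI impI)
    fix m :: nat
    obtain K where K: "compact K" "convex K" "L \<subseteq> cthickening K (inverse (Suc m))" "Omega K \<le> c"
      using cover[of "inverse (Suc m)"] by auto
    then have "erosion L (inverse (Suc m)) \<subseteq> K"
      by (intro erosion_subset_if_subset_cthickening compact_imp_closed) auto
    then show "Omega (erosion L (inverse (Suc m))) \<le> c"
      using K assms(1) Omega_subset_mono[of _ K] by (meson compact_erosion of_nat_0_le_iff
          inverse_nonnegative_iff_nonnegative order_trans)
  qed
qed

lemma Omega_ge_if_inside_cthickenings:
  fixes L :: "'a::euclidean_space set"
  assumes "compact L"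
    and inside: "\<And>e. e > 0 \<Longrightarrow> \<exists>K. compact K \<and> K \<subseteq> cthickening L e \<and> c \<le> Omega K"
  shows "c \<le> Omega L"
proof (rule LIMSEQ_le_const)
  have "cthickening L (inverse (Suc m)) \<subseteq> cthickening L 1" for m
    by (rule cthickening_mono) (simp add: field_simps)
  then show "(\<lambda>m. Omega (cthickening L (inverse (Suc m)))) \<longlonglongrightarrow> Omega L"
    using assms(1)
    by (intro Omega_tendsto[where C = "cthickening L 1"] compact_cthickening measure_cthickening_tendsto)
  show "\<exists>N. \<forall>m\<ge>N. c \<le> Omega (cthickening L (inverse (Suc m)))"
  proof (intro exI allI impI)
    fix m :: nat
    obtain K where "compact K" "K \<subseteq> cthickening L (inverse (Suc m))" "c \<le> Omega K"
      using inside[of "inverse (Suc m)"] by auto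
    then show "c \<le> Omega (cthickening L (inverse (Suc m)))"
      using Omega_subset_mono compact_cthickening[OF assms(1)] order_trans by blast
  qed
qed

lemma steiner_process_compact_convex:
  assumes "compact K" "convex K" "K \<noteq> {}" "\<And>i. norm (u i) = 1"
  shows "compact (steiner_process u K i) \<and> convex (steiner_process u K i) \<and> steiner_process u K i \<noteq> {}"
proof (induction i)
  case (Suc i)
  then show ?case
    using steiner_compact_convex[of "steiner_process u K i" "u i"] assms(4) by simp
qed (use assms in simp)

lemma Omega_steiner_process_mono:
  assumes "compact K" "convex K" "K \<noteq> {}" "\<And>i. norm (u i) = 1"
  shows "incseq (\<lambda>i. Omega (steiner_process u K i))"
proof (rule incseq_SucI)
  fix i
  have "compact (steiner_process u K i)" "convex (steiner_process u K i)" "steiner_process u K i \<noteq> {}"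
    using steiner_process_compact_convex[OF assms] by auto
  then show "Omega (steiner_process u K i) \<le> Omega (steiner_process u K (Suc i))"
    using assms(4) by (auto intro: Omega_mono steiner_compact_convex measure_Int_cball_le_steiner)
qed

lemma Omega_subseq_limit_eq_SUP:
  fixes Ks :: "nat \<Rightarrow> 'a::euclidean_space set"
  assumes lim: "subseq_limit Ks L"
    and Ks: "\<And>i. compact (Ks i)" "\<And>i. convex (Ks i)" "\<And>i. Ks i \<noteq> {}"
    and mono: "incseq (\<lambda>i. Omega (Ks i))"
  shows "Omega L = (SUP i\<in>{1..}. Omega (Ks i))"
proof -
  have L: "compact L"
    using lim by (simp add: subseq_limit_def)
  have close: "\<exists>j\<ge>i. Ks j \<subseteq> cthickening L e \<and> L \<subseteq> cthickening (Ks j) e" if "e > 0" for e i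
    using subseq_limit_frequently_close[OF lim Ks(1,3) that] .
  have "convex L"
    using close Ks(2) by (intro convex_if_cthickening_approximations compact_imp_closed L) blast
  have upper: "Omega (Ks i) \<le> Omega L" for i
    using close Ks(1) mono by (intro Omega_ge_if_inside_cthickenings L) (meson incseqD)
  then have bdd: "bdd_above ((\<lambda>i. Omega (Ks i)) ` {1..})"
    by (rule bdd_aboveI2)
  have "Omega L \<le> (SUP i\<in>{1..}. Omega (Ks i))"
  proof (rule Omega_le_if_cthickening_covers[OF L \<open>convex L\<close>])
    fix e :: real assume "e > 0"
    then obtain j where "j \<ge> 1" "L \<subseteq> cthickening (Ks j) e"
      using close by blast
    then show "\<exists>K. compact K \<and> convex K \<and> L \<subseteq> cthickening K e \<and> Omega K \<le> (SUP i\<in>{1..}. Omega (Ks i))"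
      using Ks cSUP_upper[OF _ bdd] by fastforce
  qed
  moreover have "(SUP i\<in>{1..}. Omega (Ks i)) \<le> Omega L"
    using upper by (intro cSUP_least) auto
  ultimately show ?thesis
    by (rule antisym)
qed

theorem proposition4p2:
  fixes K L :: "'a::euclidean_space set" and u :: "nat \<Rightarrow> 'a"
  assumes "compact K" and "convex K" and "K \<noteq> {}"
    and "\<And>i. norm (u i) = 1"
    and "subseq_limit (steiner_process u K) L"
  shows "Omega L = (SUP i\<in>{1..}. Omega (steiner_process u K i))"
proof (rule Omega_subseq_limit_eq_SUP[OF assms(5)])
  show "compact (steiner_process u K i)" "convex (steiner_process u K i)" "steiner_process u K i \<noteq> {}"
    for i
    using steiner_process_compact_convex[of K u i] assms(1-4) by simp_all
  show "incseq (\<lambda>i. Omega (steiner_process u K i))"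
    using Omega_steiner_process_mono[of K u] assms(1-4) by simp
qed

end
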